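(* Let $2\le k<d+1$ and let $\Delta_k^d=\operatorname{tconv}\{-e_I:I\subseteq[d+1],|I|=k\}\subseteq\mathbb{T}^d$ with $V$ the family of these $\binom{d+1}{k}$ points. Then the set of coarse types of the maximal cells of the tropical complex $\mathcal{C}_V$ is, up to permutation of coordinates by $\operatorname{Sym}(d+1)$, the set of tuples $$\Big(\tbinom{d+1-\alpha}{k}+\tbinom{d}{k-1},\ \tbinom{d-1}{k-1},\ \dots,\ \tbinom{d-(\alpha-1)}{k-1},\ \underbrace{0,\dots,0}_{d+1-\alpha}\Big)$$ for $1\le\alpha\le d+2-k$; that is, the set of coarse types of maximal cells is the union of the $\operatorname{Sym}(d+1)$-orbits of these tuples.
   Context: Tropical arithmetic is min-plus; $\mathbb{T}^d=\mathbb{R}^{d+1}/\mathbb{R}(1,\dots,1)$; $e_I=\sum_{i\in I}e_i$. For $m\in[d+1]$ let $\bar S_m=\{\xi\in\mathbb{T}^d:\xi_m=\min_i\xi_i\}$. For $V=(v_1,\dots,v_n)$ and $x\in\mathbb{T}^d$, $\operatorname{type}_V(x)=(T_1,\dots,T_{d+1})$ with $T_m=\{l:v_l\in x+\bar S_m\}$. The cells $\{x:\operatorname{type}_V(x)=\mathcal{T}\}$ have closures forming a polyhedral subdivision $\mathcal{C}_V$ of $\mathbb{T}^d$ (the tropical complex); maximal cells are the inclusion-maximal ones. The coarse type of a cell is $(|T_1|,\dots,|T_{d+1}|)$ for its relative interior points. *)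

theory Defs
  imports "HOL-Analysis.Analysis"
begin

text \<open>We work in \<open>\<real>^(d+1)\<close> with coordinates indexed by a finite type 'n,
  CARD('n) = d+1. The tropical torus is the quotient by \<open>\<real>(1,...,1)\<close>; all
  notions below are invariant under adding multiples of (1,...,1), so cells of
  the tropical complex in the torus correspond exactly to their (cylindrical)
  preimages in \<open>\<real>^(d+1)\<close>.\<close>

definition neg_eI :: "'n::finite set \<Rightarrow> real^'n" where
  "neg_eI I = (\<chi> i. if i \<in> I then -1 else 0)"

text \<open>The point family V of Delta_k^d, indexed by the k-subsets I of [d+1].\<close>
definition hyp_index :: "nat \<Rightarrow> 'n::finite set set" where
  "hyp_index k = {I. card I = k}"

text \<open>Min-plus type: \<open>T_m = {l. v_l \<in> x + S_m}\<close>, where \<open>S_m = {\<xi>. \<xi>_m = min_i \<xi>_i}\<close>.\<close>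
definition trop_type :: "nat \<Rightarrow> real^'n::finite \<Rightarrow> 'n \<Rightarrow> 'n set set" where
  "trop_type k x m = {I \<in> hyp_index k.
      (neg_eI I - x) $ m = Min (range (\<lambda>i. (neg_eI I - x) $ i))}"

definition type_region :: "nat \<Rightarrow> ('n::finite \<Rightarrow> 'n set set) \<Rightarrow> (real^'n) set" where
  "type_region k T = {x. trop_type k x = T}"

definition trop_cells :: "nat \<Rightarrow> (real^'n::finite) set set" where
  "trop_cells k = {closure (type_region k T) | T. type_region k T \<noteq> {}}"

definition maximal_cells :: "nat \<Rightarrow> (real^'n::finite) set set" where
  "maximal_cells k = {C \<in> trop_cells k. \<not> (\<exists>C'\<in>trop_cells k. C \<subset> C')}"

definition coarse_type :: "nat \<Rightarrow> real^'n::finite \<Rightarrow> 'n \<Rightarrow> nat" where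
  "coarse_type k x = (\<lambda>m. card (trop_type k x m))"

text \<open>The tuple of the theorem, positions 0..d (position j+1 in the paper is j here).\<close>
definition hyp_tuple :: "nat \<Rightarrow> nat \<Rightarrow> nat \<Rightarrow> nat \<Rightarrow> nat" where
  "hyp_tuple d k \<alpha> j =
     (if j = 0 then ((d + 1 - \<alpha>) choose k) + (d choose (k - 1))
      else if j < \<alpha> then ((d - j) choose (k - 1)) else 0)"

end

theory Submission
  imports Defs
begin

text \<open>A point lies in the relative interior of a maximal cell exactly when it is generic: every
  \<open>-e_I\<close> lies in a single sector \<open>x + S_m\<close>. Generic types have open convex regions, and a small
  perturbation turns any point into a generic one whose region has the original cell in its
  closure. At a generic point \<open>x\<close> the largest coordinate \<open>a\<close> is unique; let \<open>A\<close> be the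
  coordinates within distance 1 of \<open>x\<^sub>a\<close>. Then \<open>I \<in> T\<^sub>a\<close> iff \<open>a \<in> I\<close> or \<open>I\<close> misses \<open>A\<close>;
  for \<open>m \<in> A - {a}\<close>, \<open>I \<in> T\<^sub>m\<close> iff \<open>m \<in> I\<close> and \<open>I\<close> misses every other coordinate
  \<open>\<ge> x\<^sub>m\<close>; coordinates outside \<open>A\<close> carry no type. Ranking the coordinates in decreasing order,
  this gives \<open>|T\<^sub>m| = binom(d - rank m, k - 1)\<close> on \<open>A - {a}\<close>, which vanishes from rank
  \<open>d + 2 - k\<close> on; genericity allows ties only where these counts vanish anyway. The result is
  the tuple with \<open>\<alpha> = min |A| (d + 2 - k)\<close>, and every \<open>\<alpha>\<close> and ranking is realised by
  placing \<open>\<alpha>\<close> distinct coordinates in \<open>(-1, 0]\<close> and the rest below \<open>-1\<close>.\<close>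

section \<open>Counting\<close>

lemma card_Compl: "card (- A) = CARD('a) - card (A :: 'a::finite set)"
  by (simp add: Compl_eq_Diff_UNIV card_Diff_subset)

lemma card_ksubsets_disjoint:
  "card {I::'n::finite set. card I = k \<and> I \<inter> A = {}} = (CARD('n) - card A) choose k"
proof -
  have "{I::'n set. card I = k \<and> I \<inter> A = {}} = {I. I \<subseteq> - A \<and> card I = k}" by auto
  moreover have "card (- A) = CARD('n) - card A" by (simp add: card_Compl)
  ultimately show ?thesis using n_subsets[of "- A" k] by simp
qed

lemma card_ksubsets_containing_disjoint:
  assumes "a \<notin> U" "k \<ge> 1"
  shows "card {I::'n::finite set. card I = k \<and> a \<in> I \<and> I \<inter> U = {}}
    = (CARD('n) - card U - 1) choose (k - 1)"
proof -
  let ?S = "{J. J \<subseteq> - U - {a} \<and> card J = k - 1}"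
  have "{I::'n set. card I = k \<and> a \<in> I \<and> I \<inter> U = {}} = insert a ` ?S"
  proof (intro set_eqI iffI)
    fix I :: "'n set" assume I: "I \<in> {I. card I = k \<and> a \<in> I \<and> I \<inter> U = {}}"
    then have "I - {a} \<in> ?S" by auto
    with I show "I \<in> insert a ` ?S" by (intro image_eqI[of _ _ "I - {a}"]) auto
  next
    fix I assume "I \<in> insert a ` ?S"
    then obtain J where J: "I = insert a J" "J \<subseteq> - U - {a}" "card J = k - 1" by blast
    have "a \<notin> J" using J(2) by blast
    then have "card I = Suc (k - 1)" using J(1,3) by (simp add: card_insert_disjoint)
    with J assms show "I \<in> {I. card I = k \<and> a \<in> I \<and> I \<inter> U = {}}" by auto
  qed
  moreover have "inj_on (insert a) ?S"
  proof (rule inj_onI)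
    fix J J' assume "J \<in> ?S" "J' \<in> ?S" "insert a J = insert a J'"
    then have "a \<notin> J" "a \<notin> J'" "insert a J = insert a J'" by blast+
    then show "J = J'" by (metis Diff_insert_absorb)
  qed
  moreover have "card (- U - {a}) = CARD('n) - card U - 1"
    using assms(1) by (simp add: card_Diff_singleton card_Compl)
  ultimately show ?thesis using n_subsets[of "- U - {a}" "k - 1"] by (simp add: card_image)
qed

lemma ex_card_between:
  assumes "F \<subseteq> S" "finite S" "card F \<le> k" "k \<le> card S"
  obtains I where "F \<subseteq> I" "I \<subseteq> S" "card I = k"
proof -
  have fF: "finite F" using assms(1,2) by (rule finite_subset)
  have "k - card F \<le> card (S - F)" using assms by (simp add: card_Diff_subset fF)
  then obtain J where J: "J \<subseteq> S - F" "card J = k - card F" "finite J"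
    by (rule obtain_subset_with_card_n)
  have "card (F \<union> J) = card F + card J" using J fF by (intro card_Un_disjoint) auto
  then have "card (F \<union> J) = k" using J(2) assms(3) by simp
  moreover have "F \<union> J \<subseteq> S" using J(1) assms(1) by blast
  ultimately show ?thesis by (intro that[of "F \<union> J"]) simp_all
qed

lemma binomial_diff_min_cancel:
  assumes "c \<le> n" "1 \<le> k"
  shows "(n - min c (n + 1 - k)) choose k = (n - c) choose k"
  using assms by (cases "c \<le> n + 1 - k") (auto simp: binomial_eq_0 min_def)

lemma card_less_rank:
  assumes "bij_betw \<sigma> (UNIV :: 'a::finite set) {..<n}" "r \<le> n"
  shows "card {i. \<sigma> i < r} = r"
proof -
  have "bij_betw \<sigma> {i. \<sigma> i < r} (\<sigma> ` {i. \<sigma> i < r})"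
    using assms(1) by (rule bij_betw_subset) auto
  moreover have "\<sigma> ` {i. \<sigma> i < r} = range \<sigma> \<inter> {..<r}" by auto
  with assms have "\<sigma> ` {i. \<sigma> i < r} = {..<r}" by (auto simp: bij_betw_def)
  ultimately show ?thesis by (simp add: bij_betw_same_card)
qed

lemma bij_betw_lessThan_CARD_ex_zero:
  assumes "bij_betw \<sigma> (UNIV :: 'a::finite set) {..<CARD('a)}"
  obtains a where "\<sigma> a = 0"
proof -
  have "0 \<in> {..<CARD('a)}" by simp
  with assms show ?thesis using that by (metis bij_betw_imp_surj_on rangeE)
qed

lemma bij_betw_card_predecessors:
  fixes r :: "('a::finite \<times> 'a) set"
  assumes "trans r" "irrefl r" "total r"
  shows "bij_betw (\<lambda>m. card {i. (i, m) \<in> r}) UNIV {..<CARD('a)}"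
    and "(i, j) \<in> r \<Longrightarrow> card {l. (l, i) \<in> r} < card {l. (l, j) \<in> r}"
proof -
  let ?\<sigma> = "\<lambda>m. card {i. (i, m) \<in> r}"
  show mono: "?\<sigma> i < ?\<sigma> j" if "(i, j) \<in> r" for i j
  proof -
    have "{l. (l, i) \<in> r} \<subset> {l. (l, j) \<in> r}"
      using that assms(1,2) by (auto dest: transD simp: irrefl_def)
    then show ?thesis by (intro psubset_card_mono) auto
  qed
  have "inj ?\<sigma>"
  proof (rule injI, rule ccontr)
    fix i j assume "?\<sigma> i = ?\<sigma> j" "i \<noteq> j"
    with assms(3) mono show False
      by (metis less_irrefl total_on_def UNIV_I)
  qed
  moreover have "?\<sigma> m < CARD('a)" for m
  proof -
    have "{i. (i, m) \<in> r} \<subseteq> - {m}" using assms(2) by (auto simp: irrefl_def)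
    then have "?\<sigma> m \<le> CARD('a) - 1" using card_mono[of "- {m}"] by (simp add: card_Compl)
    moreover have "0 < CARD('a)" by simp
    ultimately show ?thesis by linarith
  qed
  ultimately have "range ?\<sigma> \<subseteq> {..<CARD('a)}" "card (range ?\<sigma>) = CARD('a)"
    by (auto simp: card_image)
  then have "range ?\<sigma> = {..<CARD('a)}" by (intro card_subset_eq) auto
  with \<open>inj ?\<sigma>\<close> show "bij_betw ?\<sigma> UNIV {..<CARD('a)}" by (simp add: bij_betw_def)
qed

section \<open>Types and generic points\<close>

text \<open>\<open>lift x I\<close> is \<open>x + e_I = x - (-e_I)\<close>, so \<open>-e_I \<in> x + S_m\<close> says that coordinate
  \<open>m\<close> maximises it.\<close>
definition lift :: "real^'n::finite \<Rightarrow> 'n set \<Rightarrow> 'n \<Rightarrow> real" where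
  "lift x I i = x$i + (if i \<in> I then 1 else 0)"

lemma lift_affine_combination:
  "u + v = 1 \<Longrightarrow> lift (u *\<^sub>R y + v *\<^sub>R z) I i = u * lift y I i + v * lift z I i"
  by (simp add: lift_def algebra_simps)

lemma mem_trop_type_iff:
  "I \<in> trop_type k x m \<longleftrightarrow> card I = k \<and> (\<forall>i. lift x I i \<le> lift x I m)"
proof -
  have pt: "(neg_eI I - x) $ i = - lift x I i" for i
    by (simp add: neg_eI_def lift_def)
  have "(neg_eI I - x) $ m = Min (range (\<lambda>i. (neg_eI I - x) $ i)) \<longleftrightarrow>
      (\<forall>i. lift x I i \<le> lift x I m)"
    unfolding pt eq_commute[of "- lift x I m"] by (subst Min_eq_iff) auto
  then show ?thesis
    unfolding trop_type_def hyp_index_def by simp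
qed

lemma ex_lift_argmax: "\<exists>m. \<forall>i. lift x I i \<le> lift (x::real^'n::finite) I m"
proof -
  have "Max (range (lift x I)) \<in> range (lift x I)" by (intro Max_in) auto
  then obtain m where m: "Max (range (lift x I)) = lift x I m" by blast
  have "lift x I i \<le> Max (range (lift x I))" for i by (rule Max_ge) auto
  with m show ?thesis by auto
qed

definition generic :: "nat \<Rightarrow> real^'n::finite \<Rightarrow> bool" where
  "generic k x \<longleftrightarrow> (\<forall>I m m'. I \<in> trop_type k x m \<longrightarrow> I \<in> trop_type k x m' \<longrightarrow> m = m')"

lemma genericD: "generic k x \<Longrightarrow> I \<in> trop_type k x m \<Longrightarrow> I \<in> trop_type k x m' \<Longrightarrow> m = m'"
  unfolding generic_def by blast

lemma generic_trop_type_eq: "trop_type k x = trop_type k y \<Longrightarrow> generic k x \<longleftrightarrow> generic k y"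
  by (simp add: generic_def)

lemma type_region_generic:
  assumes "generic k x"
  shows "type_region k (trop_type k x) =
    {y. \<forall>I m i. I \<in> trop_type k x m \<longrightarrow> i \<noteq> m \<longrightarrow> lift y I i < lift y I m}"
    (is "_ = ?H")
proof (intro set_eqI iffI)
  fix y assume "y \<in> type_region k (trop_type k x)"
  then have ty: "trop_type k y = trop_type k x" by (simp add: type_region_def)
  show "y \<in> ?H"
  proof (safe)
    fix I m i assume I: "I \<in> trop_type k x m" and "i \<noteq> m"
    then have "I \<notin> trop_type k y i" using genericD[OF assms] ty by metis
    moreover have "I \<in> trop_type k y m" using I ty by simp
    ultimately obtain j where "lift y I i < lift y I j" "lift y I j \<le> lift y I m"
      unfolding mem_trop_type_iff by (auto simp: not_le)
    then show "lift y I i < lift y I m" by linarith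
  qed
next
  fix y assume y: "y \<in> ?H"
  have "I \<in> trop_type k y m \<longleftrightarrow> I \<in> trop_type k x m" for I m
  proof
    assume "I \<in> trop_type k x m"
    with y show "I \<in> trop_type k y m" by (force simp: mem_trop_type_iff order_le_less)
  next
    assume I: "I \<in> trop_type k y m"
    obtain m' where "\<forall>i. lift x I i \<le> lift x I m'" using ex_lift_argmax by blast
    with I have m': "I \<in> trop_type k x m'" by (simp add: mem_trop_type_iff)
    with y I have "m = m'" by (force simp: mem_trop_type_iff not_less[symmetric])
    with m' show "I \<in> trop_type k x m" by simp
  qed
  then show "y \<in> type_region k (trop_type k x)" by (auto simp: type_region_def)
qed

lemma open_convex_type_region_generic:
  assumes "generic k (x::real^'n::finite)"
  shows "open (type_region k (trop_type k x)) \<and> convex (type_region k (trop_type k x))"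
proof -
  define H where "H I m i = {y::real^'n. (axis i 1 - axis m 1) \<bullet> y <
    (if m \<in> I then 1 else 0) - (if i \<in> I then 1 else 0)}" for I m i
  have H: "H I m i = {y. lift y I i < lift y I m}" for I m i
    by (auto simp: H_def lift_def inner_diff_left inner_axis' algebra_simps)
  define \<H> where "\<H> = {H I m i | I m i. I \<in> trop_type k x m \<and> i \<noteq> m}"
  have "type_region k (trop_type k x) = \<Inter> \<H>"
    unfolding type_region_generic[OF assms] H \<H>_def by blast
  moreover have "finite \<H>"
  proof -
    have "\<H> \<subseteq> (\<lambda>(I, m, i). H I m i) ` UNIV" unfolding \<H>_def by auto
    then show ?thesis by (rule finite_subset) simp
  qed
  moreover have "open S \<and> convex S" if "S \<in> \<H>" for S
    using that unfolding \<H>_def H_def by (auto simp only: open_halfspace_lt convex_halfspace_lt)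
  ultimately show ?thesis by (auto intro!: open_Inter convex_Inter)
qed

lemma
  assumes "generic k (x::real^'n::finite)"
  shows maximal_cell_generic: "closure (type_region k (trop_type k x)) \<in> maximal_cells k"
    and rel_interior_cell_generic:
      "rel_interior (closure (type_region k (trop_type k x))) = type_region k (trop_type k x)"
proof -
  let ?R = "type_region k (trop_type k x)"
  have op: "open ?R" and cv: "convex ?R" using open_convex_type_region_generic[OF assms] by auto
  show "rel_interior (closure ?R) = ?R"
    using convex_rel_interior_closure[OF cv] rel_interior_open[OF op] by simp
  have xR: "x \<in> ?R" by (simp add: type_region_def)
  have "\<not> closure ?R \<subset> closure (type_region k T)" if "type_region k T \<noteq> {}" for T
  proof
    assume sub: "closure ?R \<subset> closure (type_region k T)"
    then have "?R \<inter> closure (type_region k T) \<noteq> {}" using xR closure_subset by blast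
    then have "?R \<inter> type_region k T \<noteq> {}" using open_Int_closure_eq_empty[OF op] by blast
    then have "T = trop_type k x" by (auto simp: type_region_def)
    with sub show False by simp
  qed
  with xR show "closure ?R \<in> maximal_cells k"
    unfolding maximal_cells_def trop_cells_def by blast
qed

lemma trop_type_towards_refinement:
  assumes refines: "\<And>I m. I \<in> trop_type k w m \<Longrightarrow> I \<in> trop_type k y m" and t: "0 < t" "t \<le> 1"
  shows "trop_type k ((1 - t) *\<^sub>R y + t *\<^sub>R w) = trop_type k w"
proof -
  let ?p = "(1 - t) *\<^sub>R y + t *\<^sub>R w"
  have lp: "lift ?p I i = (1 - t) * lift y I i + t * lift w I i" for I i
    by (rule lift_affine_combination) simp
  have "I \<in> trop_type k ?p m \<longleftrightarrow> I \<in> trop_type k w m" for I m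
  proof
    assume w: "I \<in> trop_type k w m"
    then have y: "I \<in> trop_type k y m" by (rule refines)
    have "lift ?p I i \<le> lift ?p I m" for i
      unfolding lp using w y t by (intro add_mono mult_left_mono) (auto simp: mem_trop_type_iff)
    with w show "I \<in> trop_type k ?p m" by (simp add: mem_trop_type_iff)
  next
    assume I: "I \<in> trop_type k ?p m"
    obtain m' where m': "\<forall>i. lift w I i \<le> lift w I m'" using ex_lift_argmax by blast
    with I have "I \<in> trop_type k w m'" by (simp add: mem_trop_type_iff)
    then have "lift y I m \<le> lift y I m'" using refines by (simp add: mem_trop_type_iff)
    then have "(1 - t) * lift y I m \<le> (1 - t) * lift y I m'"
      using t by (intro mult_left_mono) auto
    moreover have "lift ?p I m' \<le> lift ?p I m" using I by (simp add: mem_trop_type_iff)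
    ultimately have "t * lift w I m' \<le> t * lift w I m" unfolding lp by linarith
    then have "lift w I m' \<le> lift w I m" using t by simp
    with m' I show "I \<in> trop_type k w m"
      by (auto simp: mem_trop_type_iff intro: order_trans)
  qed
  then show ?thesis by blast
qed

lemma type_region_subset_closure_refinement:
  assumes refines: "\<And>I m. I \<in> trop_type k w m \<Longrightarrow> I \<in> trop_type k z m"
  shows "type_region k (trop_type k z) \<subseteq> closure (type_region k (trop_type k (w::real^'n::finite)))"
proof
  fix y assume "y \<in> type_region k (trop_type k z)"
  then have "trop_type k y = trop_type k z" by (simp add: type_region_def)
  with refines have "(1 - t) *\<^sub>R y + t *\<^sub>R w \<in> type_region k (trop_type k w)"
    if "0 < t" "t \<le> 1" for t
    using trop_type_towards_refinement[OF _ that, of k w y] by (simp add: type_region_def)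
  then have "open_segment y w \<subseteq> type_region k (trop_type k w)"
    by (auto simp: in_segment)
  then have "closure (open_segment y w) \<subseteq> closure (type_region k (trop_type k w))"
    by (rule closure_mono)
  moreover have "y = w \<or> y \<in> closure (open_segment y w)"
    by (simp add: closure_open_segment)
  ultimately show "y \<in> closure (type_region k (trop_type k w))"
    using closure_subset[of "type_region k (trop_type k w)"] by (auto simp: type_region_def)
qed

lemma ex_lift_gap:
  "\<exists>\<delta>>0. \<forall>I i j. lift z I i < lift z I j \<longrightarrow> \<delta> \<le> lift z I j - lift (z::real^'n::finite) I i"
proof -
  define D where
    "D = (\<lambda>(I, i, j). lift z I j - lift z I i) ` {(I, i, j). lift z I i < lift z I j}"
  have D: "finite D" "\<And>d. d \<in> D \<Longrightarrow> 0 < d" unfolding D_def by auto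
  have "lift z I j - lift z I i \<in> D" if "lift z I i < lift z I j" for I i j
    unfolding D_def using that by (intro image_eqI[of _ _ "(I, i, j)"]) auto
  moreover have "0 < Min (insert 1 D)" using D by (simp add: Min_gr_iff)
  ultimately show ?thesis using D(1) by (intro exI[of _ "Min (insert 1 D)"]) auto
qed

text \<open>Perturbing by a small multiple of an injective vector breaks all ties of \<open>lift z I\<close>
  without creating new maxima.\<close>
lemma ex_generic_refinement:
  "\<exists>w. generic k w \<and> (\<forall>I m. I \<in> trop_type k w m \<longrightarrow> I \<in> trop_type k (z::real^'n::finite) m)"
proof -
  obtain \<tau> :: "'n \<Rightarrow> nat" and N where \<tau>: "\<tau> ` UNIV = {..<N}" "inj \<tau>"
    using finite_imp_inj_to_nat_seg[of "UNIV::'n set"] by (auto simp: lessThan_def)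
  define p where "p i = real (\<tau> i) / real (N + 1)" for i
  have p: "0 \<le> p i" "p i < 1" for i
  proof -
    have "\<tau> i < N" using \<tau>(1) by blast
    then show "0 \<le> p i" "p i < 1" by (auto simp: p_def field_simps)
  qed
  have p_inj: "p i = p j \<Longrightarrow> i = j" for i j
    using \<tau>(2) by (auto simp: p_def inj_def)
  obtain \<delta> where \<delta>: "\<delta> > 0" "\<And>I i j. lift z I i < lift z I j \<Longrightarrow> \<delta> \<le> lift z I j - lift z I i"
    using ex_lift_gap by blast
  define w where "w = z + (\<delta> / 2) *\<^sub>R (\<chi> i. p i)"
  have lw: "lift w I i = lift z I i + \<delta> / 2 * p i" for I i
    by (simp add: w_def lift_def)
  have no_new_max: "lift z I i \<le> lift z I m" if "lift w I i \<le> lift w I m" for I i m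
  proof (rule ccontr)
    assume "\<not> ?thesis"
    then have "\<delta> \<le> lift z I i - lift z I m" using \<delta>(2) by simp
    moreover have "\<delta> / 2 * (p m - p i) < \<delta> / 2 * 1"
      using \<delta>(1) p[of m] p[of i] by (intro mult_strict_left_mono) auto
    ultimately show False using that \<delta>(1) unfolding lw by (simp add: algebra_simps)
  qed
  have "generic k w"
    unfolding generic_def
  proof (intro allI impI)
    fix I m m' assume "I \<in> trop_type k w m" "I \<in> trop_type k w m'"
    then have "lift w I m = lift w I m'" by (simp add: mem_trop_type_iff order_antisym)
    moreover from this have "lift z I m = lift z I m'" using no_new_max by (simp add: order_antisym)
    ultimately show "m = m'" using \<delta>(1) p_inj unfolding lw by simp
  qed
  moreover have "\<forall>I m. I \<in> trop_type k w m \<longrightarrow> I \<in> trop_type k z m"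
    using no_new_max by (auto simp: mem_trop_type_iff)
  ultimately show ?thesis by blast
qed

text \<open>A maximal cell contains the region of a generic refinement of its own type, so it is
  that region's closure.\<close>
lemma generic_rel_interior_maximal_cell:
  assumes "C \<in> maximal_cells k" and "x \<in> rel_interior C"
  shows "generic k (x::real^'n::finite)"
proof -
  obtain T where C: "C = closure (type_region k T)" "type_region k T \<noteq> {}"
    using assms(1) unfolding maximal_cells_def trop_cells_def by blast
  then obtain z where "z \<in> type_region k T" by blast
  then have T: "T = trop_type k z" by (simp add: type_region_def)
  obtain w :: "real^'n" where w: "generic k w" "\<forall>I m. I \<in> trop_type k w m \<longrightarrow> I \<in> trop_type k z m"
    using ex_generic_refinement by blast
  let ?R = "type_region k (trop_type k w)"
  have "C \<subseteq> closure ?R"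
    unfolding C T using type_region_subset_closure_refinement[of k w z] w(2)
    by (intro closure_minimal) auto
  moreover have "closure ?R \<in> trop_cells k"
    using maximal_cell_generic[OF w(1)] by (simp add: maximal_cells_def)
  ultimately have "C = closure ?R"
    using assms(1) unfolding maximal_cells_def by blast
  with assms(2) have "trop_type k x = trop_type k w"
    using rel_interior_cell_generic[OF w(1)] by (simp add: type_region_def)
  with w(1) show ?thesis using generic_trop_type_eq by blast
qed

lemma coarse_types_of_maximal_cells:
  "{coarse_type k x | C x. C \<in> (maximal_cells k :: (real^'n::finite) set set) \<and> x \<in> rel_interior C}
     = coarse_type k ` {x. generic k x}"
proof (intro set_eqI iffI)
  fix c assume "c \<in> {coarse_type k x | C x. C \<in> (maximal_cells k :: (real^'n) set set) \<and> x \<in> rel_interior C}"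
  then show "c \<in> coarse_type k ` {x. generic k x}"
    using generic_rel_interior_maximal_cell by blast
next
  fix c assume "c \<in> coarse_type k ` {x :: real^'n. generic k x}"
  then obtain x :: "real^'n" where "generic k x" "c = coarse_type k x" by blast
  moreover from this have "x \<in> rel_interior (closure (type_region k (trop_type k x)))"
    unfolding rel_interior_cell_generic[OF \<open>generic k x\<close>] by (simp add: type_region_def)
  ultimately show "c \<in> {coarse_type k x | C x. C \<in> (maximal_cells k :: (real^'n) set set) \<and> x \<in> rel_interior C}"
    using maximal_cell_generic by blast
qed

section \<open>Coarse types at generic points\<close>

text \<open>A tie between coordinates \<open>m\<close> and \<open>j\<close> of a generic point is harmless only if it is
  invisible: otherwise a \<open>k\<close>-set containing both and avoiding all larger coordinates would lie
  in \<open>T_m\<close> and \<open>T_j\<close>.\<close>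
lemma generic_tie_few_above:
  fixes x :: "real^'n::finite"
  assumes "generic k x" "2 \<le> k" "\<forall>i. x$i \<le> x$m + 1" "j \<noteq> m" "x$j = x$m"
  shows "CARD('n) - card {i. x$m < x$i} < k"
proof (rule ccontr)
  let ?P = "{i. x$m < x$i}"
  assume "\<not> ?thesis"
  then have "k \<le> card (- ?P)" by (simp add: card_Compl)
  moreover have "{m, j} \<subseteq> - ?P" using assms(5) by auto
  moreover have "card {m, j} \<le> k" using assms(2,4) by simp
  ultimately obtain I where I: "{m, j} \<subseteq> I" "I \<subseteq> - ?P" "card I = k"
    by (metis ex_card_between finite)
  have "lift x I i \<le> x$m + 1" for i
  proof (cases "i \<in> I")
    case True
    then have "x$i \<le> x$m" using I(2) by (auto simp: not_less)
    with True show ?thesis by (simp add: lift_def)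
  next
    case False
    with assms(3) show ?thesis by (simp add: lift_def)
  qed
  moreover have "lift x I m = x$m + 1" "lift x I j = x$m + 1"
    using I(1) assms(5) by (auto simp: lift_def)
  ultimately have "I \<in> trop_type k x m" "I \<in> trop_type k x j"
    using I(3) by (simp_all add: mem_trop_type_iff)
  then show False using genericD[OF assms(1)] assms(4) by blast
qed

lemma generic_unique_max:
  fixes x :: "real^'n::finite"
  assumes "generic k x" "2 \<le> k" "k \<le> CARD('n)" "\<forall>i. x$i \<le> x$a" "i \<noteq> a"
  shows "x$i < x$a"
proof (rule ccontr)
  assume "\<not> ?thesis"
  with assms(4) have "x$i = x$a" by (simp add: order_antisym)
  moreover have "\<forall>i. x$i \<le> x$a + 1" using assms(4) by (simp add: add_increasing2)
  ultimately have "CARD('n) - card {j. x$a < x$j} < k"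
    using generic_tie_few_above[OF assms(1,2)] assms(5) by blast
  moreover have "{j. x$a < x$j} = {}" using assms(4) by (auto simp: not_less)
  ultimately show False using assms(3) by simp
qed

lemma trop_type_top:
  fixes x :: "real^'n::finite"
  assumes "\<forall>i. i \<noteq> a \<longrightarrow> x$i < x$a"
  shows "trop_type k x a = {I. card I = k \<and> (a \<in> I \<or> I \<inter> {i. x$a - 1 < x$i} = {})}"
proof -
  have "(\<forall>i. lift x I i \<le> lift x I a) \<longleftrightarrow> a \<in> I \<or> I \<inter> {i. x$a - 1 < x$i} = {}" for I
  proof
    assume max: "\<forall>i. lift x I i \<le> lift x I a"
    show "a \<in> I \<or> I \<inter> {i. x$a - 1 < x$i} = {}"
    proof (rule ccontr)
      assume "\<not> ?thesis"
      then obtain i where "a \<notin> I" "i \<in> I" "x$a - 1 < x$i" by auto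
      then have "lift x I a < lift x I i" by (simp add: lift_def)
      with max show False by (simp add: not_less[symmetric])
    qed
  next
    assume "a \<in> I \<or> I \<inter> {i. x$a - 1 < x$i} = {}"
    with assms show "\<forall>i. lift x I i \<le> lift x I a"
      by (fastforce simp: lift_def not_less)
  qed
  then show ?thesis by (auto simp: mem_trop_type_iff)
qed

lemma trop_type_near_top:
  fixes x :: "real^'n::finite"
  assumes "generic k x" "\<forall>i. i \<noteq> a \<longrightarrow> x$i < x$a" "m \<noteq> a" "x$a - 1 < x$m"
  shows "trop_type k x m = {I. card I = k \<and> m \<in> I \<and> I \<inter> {i. i \<noteq> m \<and> x$m \<le> x$i} = {}}"
proof (intro set_eqI iffI)
  fix I assume I: "I \<in> trop_type k x m"
  then have "\<forall>i. lift x I i \<le> lift x I m" by (simp add: mem_trop_type_iff)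
  moreover have "lift x I m < lift x I a" if "m \<notin> I"
    using that assms(2,3) by (auto simp: lift_def add_strict_increasing2)
  ultimately have mI: "m \<in> I" by (meson not_le)
  have "i \<notin> I" if "i \<noteq> m" "x$m \<le> x$i" for i
  proof
    assume "i \<in> I"
    with mI that have "lift x I m \<le> lift x I i" by (simp add: lift_def)
    with I have "I \<in> trop_type k x i" by (auto simp: mem_trop_type_iff intro: order_trans)
    with I that(1) show False using genericD[OF assms(1)] by blast
  qed
  with I mI show "I \<in> {I. card I = k \<and> m \<in> I \<and> I \<inter> {i. i \<noteq> m \<and> x$m \<le> x$i} = {}}"
    by (auto simp: mem_trop_type_iff)
next
  fix I assume I: "I \<in> {I. card I = k \<and> m \<in> I \<and> I \<inter> {i. i \<noteq> m \<and> x$m \<le> x$i} = {}}"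
  have "lift x I i \<le> lift x I m" for i
  proof (cases "i \<in> I")
    case True
    with I show ?thesis by (cases "i = m") (auto simp: lift_def)
  next
    case False
    have "x$i \<le> x$a" using assms(2) by (cases "i = a") auto
    with False I assms(4) show ?thesis by (simp add: lift_def)
  qed
  with I show "I \<in> trop_type k x m" by (simp add: mem_trop_type_iff)
qed

lemma trop_type_far_from_top:
  fixes x :: "real^'n::finite"
  assumes "generic k x" "\<forall>i. i \<noteq> a \<longrightarrow> x$i < x$a" "x$m \<le> x$a - 1"
  shows "trop_type k x m = {}"
proof (rule ccontr)
  assume "trop_type k x m \<noteq> {}"
  then obtain I where I: "I \<in> trop_type k x m" by blast
  then have "lift x I a \<le> lift x I m" by (simp add: mem_trop_type_iff)
  moreover have "lift x I m \<le> x$a" "x$a \<le> lift x I a" using assms(3) by (auto simp: lift_def)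
  ultimately have "lift x I a = lift x I m" by simp
  with I have "I \<in> trop_type k x a" by (simp add: mem_trop_type_iff)
  with I have "m = a" using genericD[OF assms(1)] by blast
  with assms(3) show False by simp
qed

lemma card_trop_type_top:
  fixes x :: "real^'n::finite"
  assumes "\<forall>i. i \<noteq> a \<longrightarrow> x$i < x$a" "k \<ge> 1"
  shows "card (trop_type k x a)
    = ((CARD('n) - card {i. x$a - 1 < x$i}) choose k) + ((CARD('n) - 1) choose (k - 1))"
proof -
  let ?A = "{i. x$a - 1 < x$i}"
  have "trop_type k x a = {I. card I = k \<and> I \<inter> ?A = {}} \<union> {I. card I = k \<and> a \<in> I \<and> I \<inter> {} = {}}"
    unfolding trop_type_top[OF assms(1)] by auto
  moreover have "a \<in> ?A" by simp
  then have "{I. card I = k \<and> I \<inter> ?A = {}} \<inter> {I. card I = k \<and> a \<in> I \<and> I \<inter> {} = {}} = {}"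
    by blast
  ultimately show ?thesis
    using card_ksubsets_disjoint[of k ?A] card_ksubsets_containing_disjoint[of a "{}" k] assms(2)
    by (simp add: card_Un_disjoint)
qed

lemma card_trop_type_near_top:
  fixes x :: "real^'n::finite"
  assumes "generic k x" "\<forall>i. i \<noteq> a \<longrightarrow> x$i < x$a" "m \<noteq> a" "x$a - 1 < x$m" "k \<ge> 1"
  shows "card (trop_type k x m) = (CARD('n) - card {i. i \<noteq> m \<and> x$m \<le> x$i} - 1) choose (k - 1)"
  unfolding trop_type_near_top[OF assms(1-4)]
  by (rule card_ksubsets_containing_disjoint) (use assms(5) in auto)

definition is_ranking :: "real^'n::finite \<Rightarrow> ('n \<Rightarrow> nat) \<Rightarrow> bool" where
  "is_ranking x \<sigma> \<longleftrightarrow> bij_betw \<sigma> UNIV {..<CARD('n)} \<and> (\<forall>i j. x$j < x$i \<longrightarrow> \<sigma> i < \<sigma> j)"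

text \<open>Ties between equal coordinates are broken by an arbitrary injection into \<open>\<nat>\<close>.\<close>
lemma ex_ranking:
  fixes x :: "real^'n::finite"
  shows "\<exists>\<sigma>. is_ranking x \<sigma>"
proof -
  obtain \<tau> :: "'n \<Rightarrow> nat" where \<tau>: "inj \<tau>"
    using finite_imp_inj_to_nat_seg[of "UNIV::'n set"] by auto
  define r where "r = {(i, j). x$j < x$i \<or> x$i = x$j \<and> \<tau> i < \<tau> j}"
  have "trans r" by (auto simp: r_def trans_def)
  moreover have "irrefl r" by (auto simp: r_def irrefl_def)
  moreover have "total r"
    unfolding total_on_def
  proof (intro ballI impI)
    fix i j :: 'n assume "i \<noteq> j"
    then have "\<tau> i \<noteq> \<tau> j" using \<tau> by (auto simp: inj_def)
    then show "(i, j) \<in> r \<or> (j, i) \<in> r" by (auto simp: r_def)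
  qed
  ultimately have "bij_betw (\<lambda>m. card {i. (i, m) \<in> r}) UNIV {..<CARD('n)}"
    and "\<And>i j. (i, j) \<in> r \<Longrightarrow> card {l. (l, i) \<in> r} < card {l. (l, j) \<in> r}"
    using bij_betw_card_predecessors by blast+
  moreover have "(i, j) \<in> r" if "x$j < x$i" for i j using that by (simp add: r_def)
  ultimately show ?thesis unfolding is_ranking_def by blast
qed

lemma ranking_mono: "is_ranking x \<sigma> \<Longrightarrow> x$j < x$i \<Longrightarrow> \<sigma> i < \<sigma> j"
  by (simp add: is_ranking_def)

lemma ranking_bounds:
  fixes x :: "real^'n::finite"
  assumes "is_ranking x \<sigma>"
  shows "card {i. x$m < x$i} \<le> \<sigma> m" and "\<sigma> m \<le> card {i. i \<noteq> m \<and> x$m \<le> x$i}"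
proof -
  have bij: "bij_betw \<sigma> UNIV {..<CARD('n)}" using assms by (simp add: is_ranking_def)
  note mono = ranking_mono[OF assms]
  have "\<sigma> m < CARD('n)" using bij by (auto simp: bij_betw_def)
  then have \<sigma>m: "\<sigma> m = card {i. \<sigma> i < \<sigma> m}"
    using card_less_rank[OF bij, of "\<sigma> m"] by simp
  have "card {i. x$m < x$i} \<le> card {i. \<sigma> i < \<sigma> m}"
    using mono by (intro card_mono) auto
  with \<sigma>m show "card {i. x$m < x$i} \<le> \<sigma> m" by linarith
  show "\<sigma> m \<le> card {i. i \<noteq> m \<and> x$m \<le> x$i}"
  proof -
    have "x$m \<le> x$i" if "\<sigma> i < \<sigma> m" for i
    proof (rule ccontr)
      assume "\<not> x$m \<le> x$i"
      then have "\<sigma> m < \<sigma> i" using mono by simp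
      with that show False by simp
    qed
    then have "{i. \<sigma> i < \<sigma> m} \<subseteq> {i. i \<noteq> m \<and> x$m \<le> x$i}" by auto
    then have "card {i. \<sigma> i < \<sigma> m} \<le> card {i. i \<noteq> m \<and> x$m \<le> x$i}"
      by (intro card_mono) auto
    with \<sigma>m show ?thesis by linarith
  qed
qed

context
  fixes x :: "real^'n::finite" and k :: nat and \<sigma> :: "'n \<Rightarrow> nat" and a :: 'n
  assumes generic: "generic k x" and k: "2 \<le> k" "k < CARD('n)"
    and ranking: "is_ranking x \<sigma>" and \<sigma>_top: "\<sigma> a = 0"
begin

lemma ranked_top_max: "x$i \<le> x$a"
proof (rule ccontr)
  assume "\<not> x$i \<le> x$a"
  then have "\<sigma> i < \<sigma> a" using ranking_mono[OF ranking] by simp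
  with \<sigma>_top show False by simp
qed

lemma ranked_top_unique: "\<forall>i. i \<noteq> a \<longrightarrow> x$i < x$a"
  using generic_unique_max[OF generic k(1)] k(2) ranked_top_max by auto

lemma ranked_rank_pos: "m \<noteq> a \<Longrightarrow> 0 < \<sigma> m"
  using ranking_mono[OF ranking, of m a] ranked_top_unique \<sigma>_top by simp

lemma card_trop_type_ranked_top:
  "card (trop_type k x a)
     = hyp_tuple (CARD('n) - 1) k (min (card {i. x$a - 1 < x$i}) (CARD('n) + 1 - k)) (\<sigma> a)"
proof -
  have "card {i. x$a - 1 < x$i} \<le> CARD('n)" by (rule card_mono) auto
  moreover have "CARD('n) - 1 + 1 = CARD('n)" using k by simp
  ultimately show ?thesis
    using card_trop_type_top[OF ranked_top_unique] binomial_diff_min_cancel k \<sigma>_top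
    by (simp add: hyp_tuple_def)
qed

lemma card_trop_type_ranked_far_from_top:
  assumes "x$m \<le> x$a - 1"
  shows "card (trop_type k x m)
     = hyp_tuple (CARD('n) - 1) k (min (card {i. x$a - 1 < x$i}) (CARD('n) + 1 - k)) (\<sigma> m)"
proof -
  have "{i. x$a - 1 < x$i} \<subseteq> {i. x$m < x$i}" using assms by auto
  then have "card {i. x$a - 1 < x$i} \<le> card {i. x$m < x$i}" by (intro card_mono) auto
  then have "card {i. x$a - 1 < x$i} \<le> \<sigma> m"
    using ranking_bounds(1)[OF ranking, of m] by linarith
  moreover have "0 < \<sigma> m" using assms by (intro ranked_rank_pos) auto
  ultimately show ?thesis
    using trop_type_far_from_top[OF generic ranked_top_unique assms]
    by (simp add: hyp_tuple_def)
qed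

lemma ranked_near_top_rank_less:
  assumes "x$a - 1 < x$m"
  shows "\<sigma> m < card {i. x$a - 1 < x$i}"
proof -
  let ?A = "{i. x$a - 1 < x$i}" and ?U = "{i. i \<noteq> m \<and> x$m \<le> x$i}"
  have "?U \<subseteq> ?A - {m}" using assms by auto
  then have "card ?U \<le> card ?A - 1"
    using card_mono[of "?A - {m}" ?U] assms by (simp add: card_Diff_singleton)
  moreover have "0 < card ?A" using assms by (auto simp: card_gt_0_iff)
  ultimately show ?thesis using ranking_bounds(2)[OF ranking, of m] by linarith
qed

text \<open>A tie at \<open>m\<close> forces both sides to vanish; without ties \<open>\<sigma> m\<close> counts exactly the
  coordinates above \<open>x$m\<close>.\<close>
lemma card_trop_type_ranked_near_top:
  assumes "m \<noteq> a" "x$a - 1 < x$m"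
  shows "card (trop_type k x m)
     = hyp_tuple (CARD('n) - 1) k (min (card {i. x$a - 1 < x$i}) (CARD('n) + 1 - k)) (\<sigma> m)"
proof -
  let ?A = "{i. x$a - 1 < x$i}" and ?U = "{i. i \<noteq> m \<and> x$m \<le> x$i}"
    and ?P = "{i. x$m < x$i}"
  let ?\<alpha> = "min (card ?A) (CARD('n) + 1 - k)"
  have card: "card (trop_type k x m) = (CARD('n) - card ?U - 1) choose (k - 1)"
    using card_trop_type_near_top[OF generic ranked_top_unique assms] k by simp
  have hyp: "hyp_tuple (CARD('n) - 1) k ?\<alpha> (\<sigma> m)
      = (if \<sigma> m < ?\<alpha> then (CARD('n) - 1 - \<sigma> m) choose (k - 1) else 0)"
    using ranked_rank_pos[OF assms(1)] by (simp add: hyp_tuple_def)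
  have bounds: "card ?P \<le> \<sigma> m" "\<sigma> m \<le> card ?U"
    using ranking_bounds[OF ranking] by auto
  show ?thesis
  proof (cases "\<exists>j. j \<noteq> m \<and> x$j = x$m")
    case True
    have "x$i \<le> x$m + 1" for i using ranked_top_max[of i] assms(2) by linarith
    with True have "CARD('n) - card ?P < k"
      using generic_tie_few_above[OF generic k(1)] by blast
    with bounds have "CARD('n) - card ?U - 1 < k - 1" "CARD('n) - 1 - \<sigma> m < k - 1"
      using k by linarith+
    then show ?thesis unfolding card hyp by (simp add: binomial_eq_0)
  next
    case False
    then have "?U = ?P" by (auto simp: less_le)
    with bounds have U: "card ?U = \<sigma> m" by simp
    show ?thesis
    proof (cases "\<sigma> m < ?\<alpha>")
      case True
      then show ?thesis unfolding card hyp U by (simp add: diff_commute)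
    next
      case False
      with ranked_near_top_rank_less[OF assms(2)] have "CARD('n) + 1 - k \<le> \<sigma> m"
        by (simp add: min_def split: if_splits)
      then have "CARD('n) - card ?U - 1 < k - 1" using U k by linarith
      then show ?thesis unfolding card hyp if_not_P[OF False] by (simp add: binomial_eq_0)
    qed
  qed
qed

lemma coarse_type_ranked:
  "coarse_type k x
     = (\<lambda>m. hyp_tuple (CARD('n) - 1) k (min (card {i. x$a - 1 < x$i}) (CARD('n) + 1 - k)) (\<sigma> m))"
proof
  fix m
  consider "m = a" | "m \<noteq> a" "x$a - 1 < x$m" | "x$m \<le> x$a - 1" by fastforce
  then show "coarse_type k x m
      = hyp_tuple (CARD('n) - 1) k (min (card {i. x$a - 1 < x$i}) (CARD('n) + 1 - k)) (\<sigma> m)"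
    unfolding coarse_type_def
    by cases (simp_all add: card_trop_type_ranked_top card_trop_type_ranked_near_top
        card_trop_type_ranked_far_from_top)
qed

end

text \<open>The maximiser of \<open>lift x I\<close> is at least \<open>x\<^sub>a = 0\<close>, hence lies in \<open>(-1, 0]\<close>, where
  distinct coordinates cannot tie even after adding \<open>e_I\<close>.\<close>
lemma generic_if_inj_near_top:
  fixes x :: "real^'n::finite"
  assumes "x$a = 0" "\<forall>i. x$i \<le> 0 \<and> x$i \<noteq> -1" "inj_on (\<lambda>i. x$i) {i. -1 < x$i}"
  shows "generic k x"
  unfolding generic_def
proof (intro allI impI)
  fix I m m' assume "I \<in> trop_type k x m" "I \<in> trop_type k x m'"
  then have max: "\<forall>i. lift x I i \<le> lift x I m" "\<forall>i. lift x I i \<le> lift x I m'"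
    by (simp_all add: mem_trop_type_iff)
  then have eq: "lift x I m = lift x I m'" by (simp add: order_antisym)
  have "0 \<le> lift x I a" using assms(1) by (simp add: lift_def)
  then have "0 \<le> lift x I m" "0 \<le> lift x I m'" using max by (meson order_trans)+
  moreover have "-1 < x$i" if "0 \<le> lift x I i" for i
    using that assms(2)[rule_format, of i] by (auto simp: lift_def split: if_splits)
  ultimately have "-1 < x$m" "-1 < x$m'" by blast+
  moreover have "x$m \<le> 0" "x$m' \<le> 0" using assms(2) by auto
  ultimately have "x$m = x$m'"
    using eq by (auto simp: lift_def split: if_splits)
  with \<open>-1 < x$m\<close> \<open>-1 < x$m'\<close> show "m = m'" using assms(3) by (auto dest: inj_onD)
qed

lemma ex_generic_coarse_type:
  assumes k: "2 \<le> k" "k < CARD('n::finite)" and \<alpha>: "1 \<le> \<alpha>" "\<alpha> \<le> CARD('n) + 1 - k"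
    and \<sigma>: "bij_betw \<sigma> (UNIV :: 'n set) {..<CARD('n)}"
  shows "\<exists>x :: real^'n. generic k x \<and> coarse_type k x = (\<lambda>m. hyp_tuple (CARD('n) - 1) k \<alpha> (\<sigma> m))"
proof -
  let ?n = "real CARD('n)"
  obtain a where a: "\<sigma> a = 0" using bij_betw_lessThan_CARD_ex_zero[OF \<sigma>] .
  define x :: "real^'n" where "x = (\<chi> m. if \<sigma> m < \<alpha> then - real (\<sigma> m) / ?n else -2)"
  have \<sigma>_less: "\<sigma> i < CARD('n)" for i using \<sigma> by (auto simp: bij_betw_def)
  have near: "-1 < x$i \<and> x$i \<le> 0" if "\<sigma> i < \<alpha>" for i
    using that \<sigma>_less[of i] by (simp add: x_def field_simps)
  have far: "x$i = -2" if "\<not> \<sigma> i < \<alpha>" for i using that by (simp add: x_def)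
  have xa: "x$a = 0" using a \<alpha>(1) by (simp add: x_def)
  have A: "{i. -1 < x$i} = {i. \<sigma> i < \<alpha>}" using near far by force
  have ranking: "is_ranking x \<sigma>"
    unfolding is_ranking_def
  proof (intro conjI allI impI \<sigma>)
    fix i j assume lt: "x$j < x$i"
    have "\<sigma> i < \<alpha>"
    proof (rule ccontr)
      assume "\<not> \<sigma> i < \<alpha>"
      moreover have "-2 \<le> x$j" using near[of j] far[of j] by (cases "\<sigma> j < \<alpha>") auto
      ultimately show False using lt far[of i] by simp
    qed
    then show "\<sigma> i < \<sigma> j"
      using lt far[of j] near[of i] by (cases "\<sigma> j < \<alpha>") (auto simp: x_def divide_less_cancel)
  qed
  have "generic k x"
  proof (rule generic_if_inj_near_top[OF xa])
    show "\<forall>i. x$i \<le> 0 \<and> x$i \<noteq> -1"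
    proof
      fix i show "x$i \<le> 0 \<and> x$i \<noteq> -1" using near[of i] far[of i] by (cases "\<sigma> i < \<alpha>") auto
    qed
    show "inj_on (\<lambda>i. x$i) {i. -1 < x$i}"
    proof (rule inj_onI)
      fix i j assume "i \<in> {i. -1 < x$i}" "j \<in> {i. -1 < x$i}" "x$i = x$j"
      then have "real (\<sigma> i) = real (\<sigma> j)" unfolding A by (simp add: x_def)
      then show "i = j" using \<sigma> by (simp add: bij_betw_def inj_eq)
    qed
  qed
  moreover have "coarse_type k x = (\<lambda>m. hyp_tuple (CARD('n) - 1) k \<alpha> (\<sigma> m))"
    using coarse_type_ranked[OF \<open>generic k x\<close> k ranking a] card_less_rank[OF \<sigma>, of \<alpha>] \<alpha> k
    by (simp add: xa A)
  ultimately show ?thesis by blast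
qed

lemma generic_coarse_type_hyp_tuple:
  fixes x :: "real^'n::finite"
  assumes "generic k x" "2 \<le> k" "k < CARD('n)"
  shows "\<exists>\<alpha> \<sigma>. 1 \<le> \<alpha> \<and> \<alpha> \<le> CARD('n) + 1 - k \<and> bij_betw \<sigma> (UNIV :: 'n set) {..<CARD('n)} \<and>
    coarse_type k x = (\<lambda>m. hyp_tuple (CARD('n) - 1) k \<alpha> (\<sigma> m))"
proof -
  obtain \<sigma> where \<sigma>: "is_ranking x \<sigma>" using ex_ranking by blast
  then obtain a where a: "\<sigma> a = 0"
    using bij_betw_lessThan_CARD_ex_zero by (auto simp: is_ranking_def)
  have "a \<in> {i. x$a - 1 < x$i}" by simp
  then have "0 < card {i. x$a - 1 < x$i}" by (metis card_gt_0_iff empty_iff finite)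
  with assms \<sigma> show ?thesis
    using coarse_type_ranked[OF assms \<sigma> a] unfolding is_ranking_def
    by (intro exI[of _ "min (card {i. x$a - 1 < x$i}) (CARD('n) + 1 - k)"] exI[of _ \<sigma>]) auto
qed

theorem mainTheorem4:
  fixes k :: nat
  assumes "2 \<le> k" and "k < CARD('n::finite)"
  shows "{coarse_type k x | C x. C \<in> (maximal_cells k :: (real^'n) set set) \<and> x \<in> rel_interior C}
       = {c. \<exists>\<alpha> \<sigma>. 1 \<le> \<alpha> \<and> \<alpha> \<le> (CARD('n) - 1) + 2 - k \<and>
               bij_betw \<sigma> (UNIV :: 'n set) {0..CARD('n) - 1} \<and>
               c = (\<lambda>m. hyp_tuple (CARD('n) - 1) k \<alpha> (\<sigma> m))}"
proof -
  have "coarse_type k ` {x :: real^'n. generic k x}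
      = {c. \<exists>\<alpha> \<sigma>. 1 \<le> \<alpha> \<and> \<alpha> \<le> CARD('n) + 1 - k \<and> bij_betw \<sigma> (UNIV :: 'n set) {..<CARD('n)} \<and>
              c = (\<lambda>m. hyp_tuple (CARD('n) - 1) k \<alpha> (\<sigma> m))}" (is "?L = ?R")
  proof
    show "?L \<subseteq> ?R" using generic_coarse_type_hyp_tuple[OF _ assms] by fastforce
    show "?R \<subseteq> ?L" using ex_generic_coarse_type[OF assms] by (force simp: image_iff)
  qed
  moreover have "{0..CARD('n) - 1} = {..<CARD('n)}" "CARD('n) - 1 + 2 - k = CARD('n) + 1 - k"
    using assms by auto
  ultimately show ?thesis unfolding coarse_types_of_maximal_cells by simp
qed

end
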